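(* Let $c\ge1$ and $\gamma\in(0,1/2]$. There is a constant $C=C(c,\gamma)$ such that the following holds. Let $\theta_1\ge\dots\ge\theta_n$ be $c$-spread, let $K=\gamma n$ be an integer with $K\ge1$, and let $\epsilon$ satisfy $\frac{4c}{\gamma n^2}\le\epsilon\le1$. Then $H^{(t,\epsilon)}\le C\,\frac{n}{\sqrt\epsilon}$ where $t=t(\epsilon,K)$. Moreover, for every $c$-spread instance with $n\ge2$, every $1\le K\le n-1$ and every $\epsilon$ with $\frac cn\le\epsilon\le1$, we have $H^{(0,\epsilon)}=\sum_{i=1}^n\min\{\Delta_i^{-2},\epsilon^{-2}\}\ge\frac{n}{4c\epsilon}$.
   Context: Means $\theta_1\ge\dots\ge\theta_n$ in $[0,1]$ are called $c$-spread (for $c\ge1$) if $|\theta_i-\theta_j|\in\left[\frac{|i-j|}{cn},\frac{c|i-j|}{n}\right]$ for all $i,j\in[n]$. Gaps: $\Delta_i=\theta_i-\theta_{K+1}$ for $i\le K$, $\Delta_i=\theta_K-\theta_i$ for $i\ge K+1$. $t(\epsilon,K)$ is the largest $t\in\{0,\dots,K-1\}$ with $\Delta_{K-t}\cdot t\le K\epsilon$ and $\Delta_{K+t+1}\cdot t\le K\epsilon$. $\Psi_t=\min(\Delta_{K-t},\Delta_{K+t+1})$, $\Psi_t^{\epsilon}=\max(\epsilon,\Psi_t)$, and $H^{(t,\epsilon)}=\sum_{i=1}^n\min\{\Delta_i^{-2},(\Psi_t^\epsilon)^{-2}\}$. *)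

theory Defs
  imports Complex_Main
begin

text \<open>Means are given as a function theta :: nat => real, used on indices 1..n.\<close>

definition c_spread :: "real \<Rightarrow> nat \<Rightarrow> (nat \<Rightarrow> real) \<Rightarrow> bool" where
  "c_spread c n theta \<longleftrightarrow>
     (\<forall>i\<in>{1..n}. 0 \<le> theta i \<and> theta i \<le> 1) \<and>
     (\<forall>i j. 1 \<le> i \<longrightarrow> i \<le> j \<longrightarrow> j \<le> n \<longrightarrow> theta j \<le> theta i) \<and>
     (\<forall>i\<in>{1..n}. \<forall>j\<in>{1..n}.
        \<bar>real i - real j\<bar> / (c * real n) \<le> \<bar>theta i - theta j\<bar> \<and>
        \<bar>theta i - theta j\<bar> \<le> c * \<bar>real i - real j\<bar> / real n)"

definition gap :: "(nat \<Rightarrow> real) \<Rightarrow> nat \<Rightarrow> nat \<Rightarrow> real" where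
  "gap theta K i = (if i \<le> K then theta i - theta (K + 1) else theta K - theta i)"

definition t_sel :: "(nat \<Rightarrow> real) \<Rightarrow> nat \<Rightarrow> real \<Rightarrow> nat" where
  "t_sel theta K eps = (GREATEST t. t \<le> K - 1 \<and>
       gap theta K (K - t) * real t \<le> real K * eps \<and>
       gap theta K (K + t + 1) * real t \<le> real K * eps)"

definition Psi :: "(nat \<Rightarrow> real) \<Rightarrow> nat \<Rightarrow> nat \<Rightarrow> real" where
  "Psi theta K t = min (gap theta K (K - t)) (gap theta K (K + t + 1))"

definition Psi_eps :: "(nat \<Rightarrow> real) \<Rightarrow> nat \<Rightarrow> nat \<Rightarrow> real \<Rightarrow> real" where
  "Psi_eps theta K t eps = max eps (Psi theta K t)"

definition H :: "(nat \<Rightarrow> real) \<Rightarrow> nat \<Rightarrow> nat \<Rightarrow> nat \<Rightarrow> real \<Rightarrow> real" where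
  "H theta n K t eps = (\<Sum>i=1..n. min (1 / (gap theta K i)^2) (1 / (Psi_eps theta K t eps)^2))"

end

theory Submission
  imports Defs
begin

text \<open>In a \<open>c\<close>-spread instance the gap of the \<open>i\<close>-th mean is comparable to \<open>d/n\<close>, where \<open>d\<close>
  is the rank distance of \<open>i\<close> to the boundary between positions \<open>K\<close> and \<open>K+1\<close>. Hence
  \<open>H\<close> is a sum \<open>\<Sum>\<^sub>d min (A/d\<^sup>2) B\<close> over both sides of the boundary, and such a sum is at
  most \<open>O(\<surd>(A B))\<close>: the terms \<open>d \<le> \<surd>(A/B)\<close> contribute \<open>B\<close> each, the rest a convergent tail.
  For \<open>t = t(\<epsilon>,K)\<close> the maximality of \<open>t\<close> forces \<open>\<Psi>\<^sub>t\<^sup>2 \<ge> \<gamma>\<^sup>2\<epsilon>/(2c\<^sup>3)\<close>, which gives the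
  upper bound \<open>O(n/\<surd>\<epsilon>)\<close>. For the lower bound, \<open>\<Psi>\<^sub>0 \<le> c/n \<le> \<epsilon>\<close>, and about \<open>\<epsilon>n/(2c)\<close> indices
  on one side of the boundary have gap at most \<open>\<epsilon>\<close>, each contributing \<open>1/\<epsilon>\<^sup>2\<close>.\<close>

lemma sum_min_inverse_square_le_split:
  fixes A B :: real
  assumes "A \<ge> 0" and "B \<ge> 0"
  shows "(\<Sum>d=1..N. min (A / (real d)^2) B)
           \<le> real (min N D) * B + 2 * A * (1 / (real D + 1) - 1 / (real (max N D) + 1))"
proof (induction N)
  case 0
  then show ?case by simp
next
  case (Suc N)
  show ?case
  proof (cases "Suc N \<le> D")
    case True
    then show ?thesis using Suc.IH by (simp add: min_absorb1 max_absorb2 algebra_simps)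
  next
    case False
    \<comment> \<open>telescoping: \<open>1/(N+1)\<^sup>2 \<le> 2 (1/(N+1) - 1/(N+2))\<close>\<close>
    have "min (A / (real (Suc N))^2) B \<le> A / (real N + 1)^2"
      by (simp add: add.commute)
    also have "\<dots> = 2 * A / (2 * (real N + 1)^2)"
      by simp
    also have "\<dots> \<le> 2 * A / ((real N + 1) * (real N + 2))"
      using assms by (intro divide_left_mono) (auto simp: power2_eq_square algebra_simps intro!: mult_pos_pos add_pos_nonneg)
    also have "\<dots> = 2 * A * (1 / (real N + 1) - 1 / (real N + 2))"
      by (simp add: field_simps)
    finally have "min (A / (real (Suc N))^2) B \<le> 2 * A * (1 / (real N + 1) - 1 / (real N + 2))" .
    with False Suc.IH show ?thesis
      by (simp add: min_absorb2 max_absorb1 algebra_simps)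
  qed
qed

lemma sum_min_inverse_square_le:
  fixes A B :: real
  assumes A: "A > 0" and B: "B > 0"
  shows "(\<Sum>d=1..N. min (A / (real d)^2) B) \<le> 3 * sqrt (A * B)"
proof -
  define s where "s = sqrt (A / B)"
  define D where "D = nat \<lfloor>s\<rfloor>"
  have s: "s > 0" "s * B = sqrt (A * B)" "A / s = sqrt (A * B)"
    using A B by (auto simp: s_def real_sqrt_divide real_sqrt_mult field_simps)
  have D: "real D \<le> s" "s < real D + 1"
    using s by (simp_all add: D_def)
  have "real (min N D) * B \<le> s * B"
    using D B by (intro mult_right_mono) auto
  moreover have "2 * A * (1 / (real D + 1) - 1 / (real (max N D) + 1)) \<le> 2 * A / s"
  proof -
    have "2 * A * (1 / (real D + 1) - 1 / (real (max N D) + 1)) \<le> 2 * A / (real D + 1)"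
      using A by (simp add: right_diff_distrib)
    also have "\<dots> \<le> 2 * A / s"
      using A s D by (intro divide_left_mono) auto
    finally show ?thesis .
  qed
  ultimately show ?thesis
    using sum_min_inverse_square_le_split[of A B N D] A B s by simp
qed

lemma c_spread_diff_bounds:
  assumes "c_spread c n theta" and "1 \<le> i" and "i < j" and "j \<le> n"
  shows "real (j - i) / (c * real n) \<le> theta i - theta j"
    and "theta i - theta j \<le> c * real (j - i) / real n"
proof -
  have "i \<in> {1..n}" and "j \<in> {1..n}"
    using assms by auto
  then have "\<bar>real i - real j\<bar> / (c * real n) \<le> \<bar>theta i - theta j\<bar> \<and>
     \<bar>theta i - theta j\<bar> \<le> c * \<bar>real i - real j\<bar> / real n"
    using assms(1) unfolding c_spread_def by blast
  moreover have "theta j \<le> theta i"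
    using assms unfolding c_spread_def by auto
  moreover have "\<bar>real i - real j\<bar> = real (j - i)"
    using assms by (simp add: of_nat_diff)
  ultimately show "real (j - i) / (c * real n) \<le> theta i - theta j"
    and "theta i - theta j \<le> c * real (j - i) / real n"
    by simp_all
qed

definition rank_dist :: "nat \<Rightarrow> nat \<Rightarrow> nat" where
  "rank_dist K i = (if i \<le> K then K + 1 - i else i - K)"

lemma rank_dist_pos: "0 < rank_dist K i"
  by (auto simp: rank_dist_def)

lemma gap_bounds:
  assumes "c_spread c n theta" and "1 \<le> K" and "K < n" and "1 \<le> i" and "i \<le> n"
  shows "real (rank_dist K i) / (c * real n) \<le> gap theta K i"
    and "gap theta K i \<le> c * real (rank_dist K i) / real n"
  using c_spread_diff_bounds[OF assms(1), of i "K + 1"] c_spread_diff_bounds[OF assms(1), of K i] assms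
  by (auto simp: gap_def rank_dist_def)

lemma inverse_square_gap_le:
  assumes "c_spread c n theta" and "c > 0" and "1 \<le> K" and "K < n" and "1 \<le> i" and "i \<le> n"
  shows "1 / (gap theta K i)^2 \<le> (c * real n)^2 / (real (rank_dist K i))^2"
proof -
  define x where "x = real (rank_dist K i) / (c * real n)"
  have "0 < x" using assms rank_dist_pos[of K i] by (simp add: x_def)
  moreover have "x \<le> gap theta K i" using gap_bounds(1)[OF assms(1,3-6)] by (simp add: x_def)
  ultimately have "1 / (gap theta K i)^2 \<le> 1 / x^2"
    by (intro divide_left_mono power_mono mult_pos_pos) auto
  then show ?thesis by (simp add: x_def power_divide)
qed

lemma sum_min_rank_dist_le:
  fixes A B :: real
  assumes "A > 0" and "B > 0" and "K \<le> n"
  shows "(\<Sum>i=1..n. min (A / (real (rank_dist K i))^2) B) \<le> 6 * sqrt (A * B)"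
proof -
  let ?g = "\<lambda>d. min (A / (real d)^2) B"
  have "(\<Sum>i=1..n. ?g (rank_dist K i))
          = (\<Sum>i=1..K. ?g (rank_dist K i)) + (\<Sum>i=K+1..K+(n-K). ?g (rank_dist K i))"
    using sum.ub_add_nat[of 1 K "\<lambda>i. ?g (rank_dist K i)" "n - K"] assms by simp
  also have "(\<Sum>i=1..K. ?g (rank_dist K i)) = (\<Sum>i=1..K. ?g (K + 1 - i))"
    by (intro sum.cong) (auto simp: rank_dist_def)
  also have "\<dots> = (\<Sum>d=1..K. ?g d)"
    using sum.atLeastAtMost_rev[of ?g 1 K] by simp
  also have "(\<Sum>i=K+1..K+(n-K). ?g (rank_dist K i)) = (\<Sum>i=1+K..(n-K)+K. ?g (i - K))"
    by (intro sum.cong) (auto simp: rank_dist_def)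
  also have "\<dots> = (\<Sum>d=1..n-K. ?g d)"
    by (subst sum.shift_bounds_cl_nat_ivl) simp
  finally show ?thesis
    using sum_min_inverse_square_le[OF assms(1,2), of K] sum_min_inverse_square_le[OF assms(1,2), of "n - K"]
    by linarith
qed

lemma Psi_eps_zero_eq:
  assumes "c_spread c n theta" and "1 \<le> K" and "K < n" and "c / real n \<le> eps"
  shows "Psi_eps theta K 0 eps = eps"
proof -
  have "Psi theta K 0 = theta K - theta (K + 1)"
    by (simp add: Psi_def gap_def)
  also have "\<dots> \<le> c / real n"
    using c_spread_diff_bounds(2)[OF assms(1), of K "K + 1"] assms by simp
  finally show ?thesis
    using assms(4) by (simp add: Psi_eps_def)
qed

lemma card_le_sum_min_inverse_square:
  fixes g :: "nat \<Rightarrow> real"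
  assumes "finite I" and "S \<subseteq> I" and "\<And>i. i \<in> S \<Longrightarrow> 0 < g i \<and> g i \<le> eps"
  shows "real (card S) / eps^2 \<le> (\<Sum>i\<in>I. min (1 / (g i)^2) (1 / eps^2))"
proof -
  have "real (card S) / eps^2 = (\<Sum>i\<in>S. 1 / eps^2)"
    by simp
  also have "\<dots> \<le> (\<Sum>i\<in>S. min (1 / (g i)^2) (1 / eps^2))"
  proof (rule sum_mono)
    fix i assume "i \<in> S"
    with assms(3) have "0 < g i" and "g i \<le> eps" by auto
    then have "1 / eps^2 \<le> 1 / (g i)^2"
      by (intro divide_left_mono power_mono mult_pos_pos) auto
    then show "1 / eps^2 \<le> min (1 / (g i)^2) (1 / eps^2)" by simp
  qed
  also have "\<dots> \<le> (\<Sum>i\<in>I. min (1 / (g i)^2) (1 / eps^2))"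
    using assms(1,2) by (intro sum_mono2) auto
  finally show ?thesis .
qed

lemma exists_rank_dist_block:
  assumes "K \<le> n"
  shows "\<exists>S \<subseteq> {1..n}. min (real q) (real n / 2) \<le> real (card S) \<and> (\<forall>i\<in>S. rank_dist K i \<le> q)"
proof (cases "n - K \<le> K")
  case True
  show ?thesis
    using True assms
    by (intro exI[of _ "{K + 1 - min K q..K}"]) (auto simp: rank_dist_def of_nat_diff)
next
  case False
  show ?thesis
    using False assms
    by (intro exI[of _ "{K + 1..K + min (n - K) q}"]) (auto simp: rank_dist_def of_nat_diff)
qed

lemma H_zero_eq:
  assumes "c_spread c n theta" and "1 \<le> K" and "K < n" and "c / real n \<le> eps"
  shows "H theta n K 0 eps = (\<Sum>i=1..n. min (1 / (gap theta K i)^2) (1 / eps^2))"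
  by (simp add: H_def Psi_eps_zero_eq[OF assms])

lemma H_zero_ge:
  assumes cs: "c_spread c n theta" and c: "c \<ge> 1" and K: "1 \<le> K" "K < n"
    and eps: "c / real n \<le> eps" "eps \<le> 1"
  shows "real n / (2 * c * eps) \<le> H theta n K 0 eps"
proof -
  have n: "real n > 0" using K by simp
  have "eps > 0" using eps c n by (smt (verit) divide_pos_pos)
  define m where "m = eps * real n / c"
  have m: "1 \<le> m" "m \<le> real n" "c * m / real n = eps"
    using eps c n \<open>eps > 0\<close> by (simp_all add: m_def field_simps)
  define q where "q = nat \<lfloor>m\<rfloor>"
  have "real q = \<lfloor>m\<rfloor>" and "1 \<le> \<lfloor>m\<rfloor>" and "m < \<lfloor>m\<rfloor> + 1"
    using m by (simp_all add: q_def)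
  then have q: "real q \<le> m" "m / 2 \<le> real q"
    by linarith+
  obtain S where S: "S \<subseteq> {1..n}" "min (real q) (real n / 2) \<le> real (card S)"
    and close: "\<forall>i\<in>S. rank_dist K i \<le> q"
    using exists_rank_dist_block[of K n q] K by auto
  have "\<And>i. i \<in> S \<Longrightarrow> 0 < gap theta K i \<and> gap theta K i \<le> eps"
  proof
    fix i assume "i \<in> S"
    then have i: "1 \<le> i" "i \<le> n" using S by auto
    have "0 < real (rank_dist K i) / (c * real n)"
      using rank_dist_pos[of K i] c n by simp
    with gap_bounds(1)[OF cs K i] show "0 < gap theta K i"
      by linarith
    have "gap theta K i \<le> c * real (rank_dist K i) / real n"
      using gap_bounds(2)[OF cs K i] .
    also have "\<dots> \<le> c * m / real n"
      using close \<open>i \<in> S\<close> q c n by (intro divide_right_mono mult_left_mono) force+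
    finally show "gap theta K i \<le> eps" using m by simp
  qed
  then have "real (card S) / eps^2 \<le> H theta n K 0 eps"
    using card_le_sum_min_inverse_square[of "{1..n}" S "gap theta K"] S
      H_zero_eq[OF cs K eps(1)] by simp
  moreover have "real n / (2 * c * eps) = (m / 2) / eps^2"
    using c \<open>eps > 0\<close> by (simp add: m_def field_simps power2_eq_square)
  moreover have "(m / 2) / eps^2 \<le> real (card S) / eps^2"
    using q m S by (intro divide_right_mono) auto
  ultimately show ?thesis
    by linarith
qed

lemma t_sel_le_and_maximal:
  fixes theta :: "nat \<Rightarrow> real" and K :: nat and eps :: real
  assumes "eps \<ge> 0"
  defines "t \<equiv> t_sel theta K eps"
  shows "t \<le> K - 1"
    and "t + 1 \<le> K - 1 \<Longrightarrow>
           real K * eps < gap theta K (K - (t + 1)) * real (t + 1) \<or>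
           real K * eps < gap theta K (K + (t + 1) + 1) * real (t + 1)"
proof -
  define P where "P = (\<lambda>t. t \<le> K - 1 \<and>
       gap theta K (K - t) * real t \<le> real K * eps \<and>
       gap theta K (K + t + 1) * real t \<le> real K * eps)"
  have "P 0" and bound: "\<And>t. P t \<Longrightarrow> t \<le> K - 1"
    using assms(1) by (simp_all add: P_def)
  have t: "t = Greatest P"
    by (simp add: t_def t_sel_def P_def)
  show "t \<le> K - 1"
    using GreatestI_nat[of P 0, OF \<open>P 0\<close> bound] t by (simp add: P_def)
  assume "t + 1 \<le> K - 1"
  moreover have "\<not> P (t + 1)"
    using Greatest_le_nat[of P "t + 1" "K - 1", OF _ bound] t by auto
  ultimately show "real K * eps < gap theta K (K - (t + 1)) * real (t + 1) \<or>
           real K * eps < gap theta K (K + (t + 1) + 1) * real (t + 1)"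
    by (auto simp: P_def)
qed

lemma double_le_of_fraction_le_half:
  assumes "real K = \<gamma> * real n" and "0 \<le> \<gamma>" and "\<gamma> \<le> 1/2"
  shows "2 * K \<le> n"
proof -
  have "(2 * \<gamma>) * real n \<le> 1 * real n"
    using assms(2,3) by (intro mult_right_mono) auto
  with assms(1) show ?thesis by linarith
qed

lemma Psi_ge:
  assumes "c_spread c n theta" and "1 \<le> K" and "t \<le> K - 1" and "2 * K \<le> n"
  shows "real (t + 1) / (c * real n) \<le> Psi theta K t"
  using gap_bounds(1)[OF assms(1,2), of "K - t"] gap_bounds(1)[OF assms(1,2), of "K + t + 1"] assms
  by (simp add: Psi_def rank_dist_def)

text \<open>If \<open>t < K - 1\<close>, the violated condition at \<open>t + 1\<close> together with the upper spread bound
  \<open>gap \<le> c (t+2)/n\<close> gives \<open>\<gamma> \<epsilon> n\<^sup>2 < c (t+1)(t+2)\<close>, i.e. \<open>t + 1\<close> is of order \<open>n \<surd>\<epsilon>\<close>.\<close>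

lemma Psi_t_sel_square_ge:
  assumes c: "c \<ge> 1" and \<gamma>: "0 < \<gamma>" "\<gamma> \<le> 1/2"
    and cs: "c_spread c n theta" and K: "real K = \<gamma> * real n" "1 \<le> K"
    and eps: "0 < eps" "eps \<le> 1"
  defines "t \<equiv> t_sel theta K eps"
  shows "0 < Psi theta K t" and "\<gamma>^2 * eps / (2 * c^3) \<le> (Psi theta K t)^2"
proof -
  have Kn: "2 * K \<le> n"
    using double_le_of_fraction_le_half[OF K(1)] \<gamma> by simp
  then have n: "real n > 0" using K by simp
  have "t \<le> K - 1" using t_sel_le_and_maximal(1) eps by (simp add: t_def)
  then have Psi: "real (t + 1) / (c * real n) \<le> Psi theta K t"
    using Psi_ge[OF cs K(2) _ Kn] by simp
  have pos: "0 < real (t + 1) / (c * real n)"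
    using c n by simp
  with Psi show "0 < Psi theta K t" by linarith
  have sq: "(real (t + 1) / (c * real n))^2 \<le> (Psi theta K t)^2"
    using Psi pos by (intro power_mono) auto
  show "\<gamma>^2 * eps / (2 * c^3) \<le> (Psi theta K t)^2"
  proof (cases "t = K - 1")
    case True
    then have "real (t + 1) / (c * real n) = \<gamma> / c"
      using K n by (simp add: of_nat_diff)
    moreover have "\<gamma>^2 * eps / (2 * c^3) \<le> (\<gamma> / c)^2"
      using c \<gamma> eps by (simp add: field_simps power2_eq_square power3_eq_cube mult_mono)
    ultimately show ?thesis using sq by simp
  next
    case False
    define T where "T = real t + 1"
    have "t + 1 \<le> K - 1" using False \<open>t \<le> K - 1\<close> by simp
    then have viol: "real K * eps < gap theta K (K - (t + 1)) * T \<or>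
                     real K * eps < gap theta K (K + (t + 1) + 1) * T"
      using t_sel_le_and_maximal(2) eps by (simp add: t_def T_def add.commute)
    have "gap theta K (K - (t + 1)) \<le> c * (T + 1) / real n"
      and "gap theta K (K + (t + 1) + 1) \<le> c * (T + 1) / real n"
      using gap_bounds(2)[OF cs K(2), of "K - (t + 1)"] gap_bounds(2)[OF cs K(2), of "K + (t + 1) + 1"]
        \<open>t + 1 \<le> K - 1\<close> Kn by (simp_all add: rank_dist_def T_def)
    with viol have "real K * eps < c * (T + 1) / real n * T"
      by (smt (verit) mult_right_mono of_nat_0_le_iff T_def)
    then have "\<gamma> * eps * (real n)^2 < c * ((T + 1) * T)"
      using K n by (simp add: field_simps power2_eq_square)
    also have "\<dots> \<le> c * (2 * T^2)"
      using c by (intro mult_left_mono) (auto simp: T_def power2_eq_square algebra_simps)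
    finally have "\<gamma> * eps / (2 * c^3) \<le> (T / (c * real n))^2"
      using c n by (simp add: field_simps power2_eq_square power3_eq_cube)
    moreover have "\<gamma>^2 * eps / (2 * c^3) \<le> \<gamma> * eps / (2 * c^3)"
      using \<gamma> c eps by (intro divide_right_mono) (auto simp: power2_eq_square)
    ultimately show ?thesis
      using sq by (simp add: T_def add.commute)
  qed
qed

lemma H_le_sum_min_rank_dist:
  assumes cs: "c_spread c n theta" and "c > 0" and K: "1 \<le> K" "K < n"
    and B: "1 / (Psi_eps theta K t eps)^2 \<le> B"
  shows "H theta n K t eps \<le> (\<Sum>i=1..n. min ((c * real n)^2 / (real (rank_dist K i))^2) B)"
  unfolding H_def
  using inverse_square_gap_le[OF cs \<open>c > 0\<close> K] B
  by (intro sum_mono min.mono) auto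

lemma H_t_sel_le:
  assumes c: "c \<ge> 1" and \<gamma>: "0 < \<gamma>" "\<gamma> \<le> 1/2"
    and cs: "c_spread c n theta" and K: "real K = \<gamma> * real n" "1 \<le> K"
    and eps: "0 < eps" "eps \<le> 1"
  shows "H theta n K (t_sel theta K eps) eps \<le> 6 * c * sqrt (2 * c^3) / \<gamma> * real n / sqrt eps"
proof -
  define t where "t = t_sel theta K eps"
  define B where "B = 2 * c^3 / (\<gamma>^2 * eps)"
  have Kn: "K < n"
    using double_le_of_fraction_le_half[OF K(1)] \<gamma> K by simp
  then have n: "real n > 0" by simp
  have Psi: "0 < Psi theta K t" "\<gamma>^2 * eps / (2 * c^3) \<le> (Psi theta K t)^2"
    using Psi_t_sel_square_ge[OF assms] by (simp_all add: t_def)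
  have pos: "0 < \<gamma>^2 * eps / (2 * c^3)" using c \<gamma> eps by simp
  have "(Psi theta K t)^2 \<le> (Psi_eps theta K t eps)^2"
    using Psi by (intro power_mono) (auto simp: Psi_eps_def)
  with Psi have lower: "\<gamma>^2 * eps / (2 * c^3) \<le> (Psi_eps theta K t eps)^2"
    by linarith
  with pos have "0 < (Psi_eps theta K t eps)^2"
    by linarith
  with lower pos have "1 / (Psi_eps theta K t eps)^2 \<le> 1 / (\<gamma>^2 * eps / (2 * c^3))"
    by (intro divide_left_mono mult_pos_pos) auto
  then have "H theta n K t eps \<le> (\<Sum>i=1..n. min ((c * real n)^2 / (real (rank_dist K i))^2) B)"
    using H_le_sum_min_rank_dist[OF cs _ K(2) Kn] c by (simp add: B_def)
  also have "\<dots> \<le> 6 * sqrt ((c * real n)^2 * B)"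
    using sum_min_rank_dist_le[of "(c * real n)^2" B K n] c \<gamma> eps n Kn by (simp add: B_def)
  also have "\<dots> = 6 * c * sqrt (2 * c^3) / \<gamma> * real n / sqrt eps"
    using c \<gamma> eps n by (simp add: B_def real_sqrt_mult real_sqrt_divide)
  finally show ?thesis by (simp add: t_def)
qed

theorem lemma1:
  fixes c \<gamma> :: real
  assumes "c \<ge> 1" and "0 < \<gamma>" and "\<gamma> \<le> 1/2"
  shows "(\<exists>C::real. \<forall>(n::nat) (theta::nat \<Rightarrow> real) (K::nat) (eps::real).
            c_spread c n theta \<longrightarrow> real K = \<gamma> * real n \<longrightarrow> K \<ge> 1 \<longrightarrow>
            4 * c / (\<gamma> * (real n)^2) \<le> eps \<longrightarrow> eps \<le> 1 \<longrightarrow>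
            H theta n K (t_sel theta K eps) eps \<le> C * real n / sqrt eps)
         \<and> (\<forall>(n::nat) (theta::nat \<Rightarrow> real) (K::nat) (eps::real).
            c_spread c n theta \<longrightarrow> n \<ge> 2 \<longrightarrow> 1 \<le> K \<longrightarrow> K \<le> n - 1 \<longrightarrow>
            c / real n \<le> eps \<longrightarrow> eps \<le> 1 \<longrightarrow>
            H theta n K 0 eps = (\<Sum>i=1..n. min (1 / (gap theta K i)^2) (1 / eps^2)) \<and>
            H theta n K 0 eps \<ge> real n / (4 * c * eps))"
proof (intro conjI exI allI impI)
  fix n K :: nat and theta :: "nat \<Rightarrow> real" and eps :: real
  assume cs: "c_spread c n theta" and K: "real K = \<gamma> * real n" "K \<ge> 1"
    and eps: "4 * c / (\<gamma> * (real n)^2) \<le> eps" "eps \<le> 1"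
  \<comment> \<open>the lower bound on \<open>eps\<close> is needed only for \<open>eps > 0\<close>\<close>
  have "0 < 4 * c / (\<gamma> * (real n)^2)"
    using assms K by (cases n) auto
  then show "H theta n K (t_sel theta K eps) eps \<le> 6 * c * sqrt (2 * c^3) / \<gamma> * real n / sqrt eps"
    using H_t_sel_le[OF assms cs K] eps by simp
next
  fix n K :: nat and theta :: "nat \<Rightarrow> real" and eps :: real
  assume cs: "c_spread c n theta" and "n \<ge> 2" "1 \<le> K" "K \<le> n - 1"
    and eps: "c / real n \<le> eps" "eps \<le> 1"
  then have K: "1 \<le> K" "K < n" by simp_all
  have "0 < c / real n" using assms K by simp
  show "H theta n K 0 eps = (\<Sum>i=1..n. min (1 / (gap theta K i)^2) (1 / eps^2))"
    using H_zero_eq[OF cs K eps(1)] .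
  have "real n / (4 * c * eps) \<le> real n / (2 * c * eps)"
    using assms eps \<open>0 < c / real n\<close> by (intro divide_left_mono) auto
  then show "real n / (4 * c * eps) \<le> H theta n K 0 eps"
    using H_zero_ge[OF cs assms(1) K eps] by linarith
qed

end
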